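(* For all integers $N,\ell\ge1$ and $k$ with $\ell+1\le k\le N$, the fractional chromatic number of $\mathcal U_{N,\ell,k}$ is at most $4\ell$.
   Context: $[N]=\{1,\dots,N\}$, $S_N$ is the set of permutations of $[N]$. For $\pi,\sigma\in S_N$, $\delta(\pi,\sigma)=\max_{i\in[N]}|\pi^{-1}(i)-\sigma^{-1}(i)|$. For $1\le k\le N$, $S_{N,k}$ is the set of injective maps $[k]\to[N]$; a permutation $\pi'\in S_N$ extends $\pi\in S_{N,k}$ if $\pi'(i)=\pi(i)$ for all $i\in[k]$. For $\pi,\sigma\in S_{N,k}$, $\delta(\pi,\sigma)=\min\{\delta(\pi',\sigma'):\pi',\sigma'\in S_N$ extending $\pi,\sigma$ respectively$\}$. The $k$-restricted uncertainty graph $\mathcal U_{N,\ell,k}$ has vertex set $S_{N,k}$, with $\pi\sim\sigma$ iff $\pi(1)\ne\sigma(1)$ and $\delta(\pi,\sigma)\le\ell$. The fractional chromatic number of $G$ is the least real $w$ such that there exist independent sets $I_1,\dots,I_t$ with nonnegative weights $w_1,\dots,w_t$, $\sum_j w_j=w$, and $\sum_{j:u\in I_j}w_j\ge1$ for every vertex $u$. *)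

theory Defs
  imports Complex_Main "HOL-Combinatorics.Permutations"
begin

text \<open>Permutations of [N] are functions nat => nat with p permutes {1..N}.\<close>

definition perm_dist :: "nat \<Rightarrow> (nat \<Rightarrow> nat) \<Rightarrow> (nat \<Rightarrow> nat) \<Rightarrow> int" where
  "perm_dist N p s = Max ((\<lambda>i. \<bar>int (inv p i) - int (inv s i)\<bar>) ` {1..N})"

definition partial_perms :: "nat \<Rightarrow> nat \<Rightarrow> (nat \<Rightarrow> nat) set" where
  "partial_perms N k = {f. inj_on f {1..k} \<and> f ` {1..k} \<subseteq> {1..N} \<and> (\<forall>i. i \<notin> {1..k} \<longrightarrow> f i = 0)}"

definition extends :: "nat \<Rightarrow> (nat \<Rightarrow> nat) \<Rightarrow> (nat \<Rightarrow> nat) \<Rightarrow> bool" where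
  "extends k p f \<longleftrightarrow> (\<forall>i\<in>{1..k}. p i = f i)"

definition partial_perm_dist :: "nat \<Rightarrow> nat \<Rightarrow> (nat \<Rightarrow> nat) \<Rightarrow> (nat \<Rightarrow> nat) \<Rightarrow> int" where
  "partial_perm_dist N k f g = Min {perm_dist N p s | p s.
      p permutes {1..N} \<and> s permutes {1..N} \<and> extends k p f \<and> extends k s g}"

definition unc_adj :: "nat \<Rightarrow> nat \<Rightarrow> nat \<Rightarrow> (nat \<Rightarrow> nat) \<Rightarrow> (nat \<Rightarrow> nat) \<Rightarrow> bool" where
  "unc_adj N l k f g \<longleftrightarrow> f 1 \<noteq> g 1 \<and> partial_perm_dist N k f g \<le> int l"

definition independent_set :: "'a set \<Rightarrow> ('a \<Rightarrow> 'a \<Rightarrow> bool) \<Rightarrow> 'a set \<Rightarrow> bool" where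
  "independent_set V E I \<longleftrightarrow> I \<subseteq> V \<and> (\<forall>u\<in>I. \<forall>v\<in>I. \<not> E u v)"

definition fractional_colouring_weight :: "'a set \<Rightarrow> ('a \<Rightarrow> 'a \<Rightarrow> bool) \<Rightarrow> real \<Rightarrow> bool" where
  "fractional_colouring_weight V E w \<longleftrightarrow>
     (\<exists>(I :: nat \<Rightarrow> 'a set) (ws :: nat \<Rightarrow> real) (t :: nat).
        (\<forall>j<t. independent_set V E (I j)) \<and> (\<forall>j<t. ws j \<ge> 0) \<and>
        (\<Sum>j<t. ws j) = w \<and>
        (\<forall>u\<in>V. (\<Sum>j\<in>{j. j < t \<and> u \<in> I j}. ws j) \<ge> 1))"

definition fractional_chromatic_number :: "'a set \<Rightarrow> ('a \<Rightarrow> 'a \<Rightarrow> bool) \<Rightarrow> real" where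
  "fractional_chromatic_number V E = Inf {w. fractional_colouring_weight V E w}"

end

theory Submission imports Defs begin

text \<open>Pick a random set \<open>A \<subseteq> [N]\<close>, containing each point independently with probability
  \<open>p = 1/(2l)\<close>, and colour with the set of those \<open>f\<close> that have \<open>f(1) \<in> A\<close> but
  \<open>f(2), \<dots>, f(l+1) \<notin> A\<close>. This set is independent: if \<open>f \<sim> g\<close>, then in extensions at distance
  at most \<open>l\<close> the value \<open>g(1)\<close> occupies one of the positions \<open>1, \<dots>, l+1\<close> of the extension of
  \<open>f\<close>, and not position \<open>1\<close> since \<open>f(1) \<noteq> g(1)\<close>; so \<open>g(1) \<in> f({2..l+1})\<close>, which is disjoint
  from \<open>A\<close>. Every vertex lies in the random set with probability \<open>p(1-p)^l \<ge> p/2 = 1/(4l)\<close>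
  by Bernoulli's inequality, so the weights \<open>4l \<cdot> Pr[A]\<close> form a fractional colouring of total
  weight \<open>4l\<close>.\<close>

lemma partial_perm_extends_to_permutation:
  assumes f: "f \<in> partial_perms N k" and kN: "k \<le> N"
  obtains p where "p permutes {1..N}" and "extends k p f"
proof -
  have inj: "inj_on f {1..k}" and img: "f ` {1..k} \<subseteq> {1..N}"
    using f unfolding partial_perms_def by auto
  define R where "R = {1..N} - f ` {1..k}"
  have "card R = card {1..N} - card (f ` {1..k})"
    unfolding R_def by (rule card_Diff_subset[OF finite_imageI[OF finite_atLeastAtMost] img])
  also have "\<dots> = N - k" using card_image[OF inj] by simp
  finally have "card {k+1..N} = card R" by simp
  then obtain h where h: "bij_betw h {k+1..N} R"
    using finite_same_card_bij[OF finite_atLeastAtMost] unfolding R_def by blast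
  define p where "p x = (if x \<in> {1..k} then f x else if x \<in> {k+1..N} then h x else x)" for x
  have "bij_betw p {1..k} (f ` {1..k})"
    using inj_on_imp_bij_betw[OF inj] by (rule bij_betw_cong[THEN iffD1, rotated]) (simp add: p_def)
  moreover have "bij_betw p {k+1..N} R"
    using h by (rule bij_betw_cong[THEN iffD1, rotated]) (simp add: p_def)
  moreover have "f ` {1..k} \<inter> R = {}" unfolding R_def by blast
  ultimately have "bij_betw p ({1..k} \<union> {k+1..N}) (f ` {1..k} \<union> R)"
    by (rule bij_betw_combine)
  moreover have "{1..k} \<union> {k+1..N} = {1..N}" using kN by auto
  moreover have "f ` {1..k} \<union> R = {1..N}" using img unfolding R_def by blast
  ultimately have "bij_betw p {1..N} {1..N}" by simp
  then have "p permutes {1..N}"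
    by (rule bij_imp_permutes) (use kN in \<open>auto simp: p_def\<close>)
  moreover have "extends k p f" by (simp add: extends_def p_def)
  ultimately show ?thesis using that by blast
qed

lemma partial_perm_dist_attained:
  assumes f: "f \<in> partial_perms N k" and g: "g \<in> partial_perms N k" and kN: "k \<le> N"
  obtains p s where "p permutes {1..N}" "s permutes {1..N}" "extends k p f" "extends k s g"
    and "partial_perm_dist N k f g = perm_dist N p s"
proof -
  define P where "P = {(p, s). p permutes {1..N} \<and> s permutes {1..N} \<and> extends k p f \<and> extends k s g}"
  have "P \<subseteq> {p. p permutes {1..N}} \<times> {s. s permutes {1..N}}" unfolding P_def by auto
  moreover have "finite ({p. p permutes {1..N}} \<times> {s. s permutes {1..N}})"
    by (simp add: finite_permutations)
  ultimately have "finite (case_prod (perm_dist N) ` P)" by (blast intro: finite_subset)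
  moreover obtain p s where "p permutes {1..N}" "extends k p f" "s permutes {1..N}" "extends k s g"
    using partial_perm_extends_to_permutation[OF f kN] partial_perm_extends_to_permutation[OF g kN] .
  then have "P \<noteq> {}" unfolding P_def by blast
  ultimately have "Min (case_prod (perm_dist N) ` P) \<in> case_prod (perm_dist N) ` P"
    by (intro Min_in) auto
  moreover have "partial_perm_dist N k f g = Min (case_prod (perm_dist N) ` P)"
    unfolding partial_perm_dist_def P_def by (rule arg_cong[where f = Min]) force
  ultimately obtain p s where "(p, s) \<in> P" "partial_perm_dist N k f g = perm_dist N p s"
    by auto
  moreover from \<open>(p, s) \<in> P\<close>
  have "p permutes {1..N}" "s permutes {1..N}" "extends k p f" "extends k s g"
    unfolding P_def by auto
  ultimately show ?thesis by (intro that)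
qed

lemma position_dist_le_perm_dist:
  assumes "i \<in> {1..N}"
  shows "\<bar>int (inv p i) - int (inv s i)\<bar> \<le> perm_dist N p s"
  unfolding perm_dist_def using assms by (intro Max_ge) auto

lemma unc_adj_first_value_in_window:
  assumes f: "f \<in> partial_perms N k" and g: "g \<in> partial_perms N k"
    and kN: "k \<le> N" and lk: "l + 1 \<le> k" and adj: "unc_adj N l k f g"
  shows "g 1 \<in> f ` {2..l+1}"
proof -
  obtain p s where p: "p permutes {1..N}" "extends k p f" and s: "s permutes {1..N}" "extends k s g"
    and dist: "partial_perm_dist N k f g = perm_dist N p s"
    using partial_perm_dist_attained[OF f g kN] .
  have p1: "p 1 = f 1" and s1: "s 1 = g 1"
    using p(2) s(2) lk unfolding extends_def by auto
  have "g 1 \<in> g ` {1..k}" using lk by simp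
  then have g1: "g 1 \<in> {1..N}" using g unfolding partial_perms_def by blast
  define j where "j = inv p (g 1)"
  have pj: "p j = g 1" unfolding j_def using permutes_inverses(1)[OF p(1)] by simp
  have "j \<in> {1..N}" unfolding j_def using g1 permutes_in_image[OF permutes_inv[OF p(1)]] by simp
  moreover have "inv s (g 1) = 1" using s1 permutes_inv_eq[OF s(1)] by metis
  moreover have "perm_dist N p s \<le> int l" using adj dist unfolding unc_adj_def by simp
  ultimately have "j \<in> {1..l+1}"
    using position_dist_le_perm_dist[OF g1, of p s] unfolding j_def by auto
  moreover have "j \<noteq> 1" using pj p1 adj unfolding unc_adj_def by auto
  ultimately have j: "j \<in> {2..l+1}" by auto
  then have "f j = p j" using p(2) lk unfolding extends_def by auto
  with j pj show ?thesis by (metis image_eqI)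
qed

definition window_set :: "nat \<Rightarrow> nat \<Rightarrow> nat \<Rightarrow> nat set \<Rightarrow> (nat \<Rightarrow> nat) set" where
  "window_set N k l A = {f \<in> partial_perms N k. f 1 \<in> A \<and> f ` {2..l+1} \<inter> A = {}}"

lemma independent_window_set:
  assumes "k \<le> N" and "l + 1 \<le> k"
  shows "independent_set (partial_perms N k) (unc_adj N l k) (window_set N k l A)"
  unfolding independent_set_def window_set_def
  using unc_adj_first_value_in_window[OF _ _ assms] by blast

definition bernoulli_weight :: "'a set \<Rightarrow> real \<Rightarrow> 'a set \<Rightarrow> real" where
  "bernoulli_weight U p A = p ^ card A * (1 - p) ^ card (U - A)"

lemma bernoulli_weight_nonneg:
  assumes "0 \<le> p" "p \<le> 1"
  shows "0 \<le> bernoulli_weight U p A"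
  unfolding bernoulli_weight_def using assms by simp

lemma sum_bernoulli_weight_Pow:
  assumes "finite U"
  shows "(\<Sum>A\<in>Pow U. bernoulli_weight U p A) = 1"
  using prod_add[OF assms, of "\<lambda>_. p" "\<lambda>_. 1 - p"] unfolding bernoulli_weight_def by simp

lemma sum_bernoulli_weight_contains_avoids:
  assumes U: "finite U" and aU: "a \<in> U" and BU: "B \<subseteq> U" and aB: "a \<notin> B"
  shows "(\<Sum>A\<in>{A\<in>Pow U. a \<in> A \<and> B \<inter> A = {}}. bernoulli_weight U p A) = p * (1 - p) ^ card B"
proof -
  txt \<open>Zeroing the factors that violate the constraints turns the restricted sum into the
    expansion of \<open>\<Prod>i\<in>U. f i + g i\<close>.\<close>
  define f where "f i = (if i \<in> B then 0 else p)" for i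
  define g where "g i = (if i = a then 0 else 1 - p)" for i
  have factorised: "(if a \<in> A \<and> B \<inter> A = {} then bernoulli_weight U p A else 0)
      = (\<Prod>i\<in>A. f i) * (\<Prod>i\<in>U - A. g i)" if "A \<subseteq> U" for A
  proof (cases "a \<in> A \<and> B \<inter> A = {}")
    case True
    have "(\<Prod>i\<in>A. f i) = (\<Prod>i\<in>A. p)" "(\<Prod>i\<in>U - A. g i) = (\<Prod>i\<in>U - A. 1 - p)"
      using True by (intro prod.cong; auto simp: f_def g_def)+
    with True show ?thesis unfolding bernoulli_weight_def by simp
  next
    case False
    with that U aU have "(\<Prod>i\<in>A. f i) = 0 \<or> (\<Prod>i\<in>U - A. g i) = 0"
      unfolding f_def g_def by (auto simp: prod_zero_iff finite_subset)
    with False show ?thesis by auto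
  qed
  have "(\<Sum>A\<in>{A\<in>Pow U. a \<in> A \<and> B \<inter> A = {}}. bernoulli_weight U p A)
      = (\<Sum>A\<in>Pow U. if a \<in> A \<and> B \<inter> A = {} then bernoulli_weight U p A else 0)"
    by (rule sum.inter_filter) (simp add: U)
  also have "\<dots> = (\<Sum>A\<in>Pow U. (\<Prod>i\<in>A. f i) * (\<Prod>i\<in>U - A. g i))"
    using factorised by (intro sum.cong) auto
  also have "\<dots> = (\<Prod>i\<in>U. f i + g i)" by (rule prod_add[OF U, symmetric])
  also have "\<dots> = (\<Prod>i\<in>insert a B. f i + g i)"
    by (rule prod.mono_neutral_right) (use U aU BU in \<open>auto simp: f_def g_def\<close>)
  also have "\<dots> = (f a + g a) * (\<Prod>i\<in>B. f i + g i)"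
    using aB finite_subset[OF BU U] by simp
  also have "(\<Prod>i\<in>B. f i + g i) = (\<Prod>i\<in>B. 1 - p)"
    using aB by (intro prod.cong) (auto simp: f_def g_def)
  finally show ?thesis using aB by (simp add: f_def g_def)
qed

lemma window_set_weight:
  assumes u: "u \<in> partial_perms N k" and lk: "l + 1 \<le> k"
  shows "(\<Sum>A\<in>{A\<in>Pow {1..N}. u \<in> window_set N k l A}. bernoulli_weight {1..N} p A)
    = p * (1 - p) ^ l"
proof -
  have inj: "inj_on u {1..k}" and img: "u ` {1..k} \<subseteq> {1..N}"
    using u unfolding partial_perms_def by auto
  have window: "{2..l+1} \<subseteq> {1..k}" and one: "1 \<in> {1..k}" using lk by auto
  have "{A\<in>Pow {1..N}. u \<in> window_set N k l A}
      = {A\<in>Pow {1..N}. u 1 \<in> A \<and> u ` {2..l+1} \<inter> A = {}}"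
    unfolding window_set_def using u by auto
  then have "(\<Sum>A\<in>{A\<in>Pow {1..N}. u \<in> window_set N k l A}. bernoulli_weight {1..N} p A)
      = (\<Sum>A\<in>{A\<in>Pow {1..N}. u 1 \<in> A \<and> u ` {2..l+1} \<inter> A = {}}. bernoulli_weight {1..N} p A)"
    by simp
  also have "\<dots> = p * (1 - p) ^ card (u ` {2..l+1})"
  proof (rule sum_bernoulli_weight_contains_avoids)
    show "u 1 \<in> {1..N}" "u ` {2..l+1} \<subseteq> {1..N}" using img window one by blast+
    show "u 1 \<notin> u ` {2..l+1}" using inj_on_image_mem_iff[OF inj one window] by simp
  qed simp
  also have "card (u ` {2..l+1}) = l" using card_image[OF inj_on_subset[OF inj window]] by simp
  finally show ?thesis .
qed

lemma fractional_colouring_weight_finite_family: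
  assumes "finite X" and "\<And>x. x \<in> X \<Longrightarrow> independent_set V E (I x)"
    and "\<And>x. x \<in> X \<Longrightarrow> 0 \<le> w x"
    and "\<And>u. u \<in> V \<Longrightarrow> 1 \<le> (\<Sum>x\<in>{x\<in>X. u \<in> I x}. w x)"
  shows "fractional_colouring_weight V E (\<Sum>x\<in>X. w x)"
proof -
  obtain e where e: "bij_betw e {..<card X} X"
    using ex_bij_betw_nat_finite[OF assms(1)] by (auto simp: atLeast0LessThan)
  have "(\<Sum>j\<in>{j. j < card X \<and> u \<in> I (e j)}. w (e j)) = (\<Sum>x\<in>{x\<in>X. u \<in> I x}. w x)" for u
  proof (rule sum.reindex_bij_betw)
    show "bij_betw e {j. j < card X \<and> u \<in> I (e j)} {x\<in>X. u \<in> I x}"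
      using e by (rule bij_betw_subset) (use e in \<open>auto simp: bij_betw_def\<close>)
  qed
  moreover have "(\<Sum>j<card X. w (e j)) = (\<Sum>x\<in>X. w x)" by (rule sum.reindex_bij_betw[OF e])
  ultimately show ?thesis
    unfolding fractional_colouring_weight_def using assms bij_betwE[OF e]
    by (intro exI[of _ "I \<circ> e"] exI[of _ "w \<circ> e"] exI[of _ "card X"]) auto
qed

lemma fractional_chromatic_number_le:
  assumes "fractional_colouring_weight V E w"
  shows "fractional_chromatic_number V E \<le> w"
proof -
  have "bdd_below {w. fractional_colouring_weight V E w}"
    unfolding fractional_colouring_weight_def
    by (rule bdd_belowI[of _ 0]) (auto intro: sum_nonneg)
  then show ?thesis
    unfolding fractional_chromatic_number_def using assms by (intro cInf_lower) auto
qed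

lemma bernoulli_coverage_bound:
  fixes l :: nat
  assumes "l \<ge> 1"
  shows "1 \<le> 4 * real l * (1 / (2 * real l) * (1 - 1 / (2 * real l)) ^ l)"
proof -
  have "1 + real l * (- (1 / (2 * real l))) \<le> (1 - 1 / (2 * real l)) ^ l"
    using Bernoulli_inequality[of "- (1 / (2 * real l))" l] assms by simp
  moreover have "1 + real l * (- (1 / (2 * real l))) = 1 / 2" using assms by simp
  ultimately show ?thesis using assms by simp
qed

theorem mainTheorem4:
  fixes N l k :: nat
  assumes "N \<ge> 1" and "l \<ge> 1" and "l + 1 \<le> k" and "k \<le> N"
  shows "fractional_chromatic_number (partial_perms N k) (unc_adj N l k) \<le> 4 * real l"
proof -
  define p :: real where "p = 1 / (2 * real l)"
  define w where "w A = 4 * real l * bernoulli_weight {1..N} p A" for A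
  have p: "0 \<le> p" "p \<le> 1" unfolding p_def using assms(2) by auto
  have "fractional_colouring_weight (partial_perms N k) (unc_adj N l k) (\<Sum>A\<in>Pow {1..N}. w A)"
  proof (rule fractional_colouring_weight_finite_family)
    show "independent_set (partial_perms N k) (unc_adj N l k) (window_set N k l A)" for A
      using independent_window_set[OF assms(4,3)] .
    show "0 \<le> w A" for A unfolding w_def using bernoulli_weight_nonneg[OF p, of "{1..N}" A] by simp
    show "1 \<le> (\<Sum>A\<in>{A\<in>Pow {1..N}. u \<in> window_set N k l A}. w A)"
      if "u \<in> partial_perms N k" for u
      using window_set_weight[OF that assms(3), of p] bernoulli_coverage_bound[OF assms(2)]
      unfolding w_def p_def by (simp add: sum_distrib_left[symmetric])
  qed simp
  moreover have "(\<Sum>A\<in>Pow {1..N}. w A) = 4 * real l"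
    unfolding w_def by (simp add: sum_distrib_left[symmetric] sum_bernoulli_weight_Pow)
  ultimately show ?thesis by (simp add: fractional_chromatic_number_le)
qed

end
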